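(* For $0<p<1$ let $f(k,p)=\frac{-1}{\log(1-p)}\frac{p^k}{k}$, $k\ge1$, be the logarithmic probability mass function. Let $X$ have pmf $f(\cdot,p)$ and $Y$ have pmf $f(\cdot,q)$ with $0<p,q<1$. Then $X\le_{st}Y$ if and only if $p\le q$, and $X\le_{wd}Y$ if and only if $p\le q$.
   Context: For a real random variable $X$, its Lévy concentration function is $Q_X(\varepsilon)=\sup_{x_0\in\mathbb{R}}\Pr\{X\in[x_0,x_0+\varepsilon]\}$, $\varepsilon>0$. For random variables $X,Y$, write $X\le_{wd}Y$ if $Q_X(\varepsilon)\ge Q_Y(\varepsilon)$ for all $\varepsilon>0$. $X\le_{st}Y$ denotes the usual stochastic order: $\Pr(X>t)\le\Pr(Y>t)$ for all $t$. *)

theory Defs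
  imports "HOL-Probability.Probability"
begin

definition logarithmic_pmf :: "real \<Rightarrow> nat \<Rightarrow> real" where
  "logarithmic_pmf p k = (if k \<ge> 1 then (-1 / ln (1 - p)) * (p ^ k / real k) else 0)"

definition levy_conc :: "real measure \<Rightarrow> real \<Rightarrow> real" where
  "levy_conc M \<epsilon> = (SUP x0::real. measure M {x0..x0 + \<epsilon>})"

definition st_le :: "real measure \<Rightarrow> real measure \<Rightarrow> bool" where
  "st_le M N \<longleftrightarrow> (\<forall>t::real. measure M {t<..} \<le> measure N {t<..})"

definition wd_le :: "real measure \<Rightarrow> real measure \<Rightarrow> bool" where
  "wd_le M N \<longleftrightarrow> (\<forall>\<epsilon>>0. levy_conc M \<epsilon> \<ge> levy_conc N \<epsilon>)"

end

theory Submission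
  imports Defs
begin

text \<open>
  For \<open>p \<le> q\<close> the ratio \<open>f(k,q)/f(k,p) = c\<^sub>q/c\<^sub>p \<cdot> (q/p)\<^sup>k\<close> is nondecreasing in \<open>k\<close>, i.e. \<open>X\<close> is smaller
  than \<open>Y\<close> in the likelihood ratio order, and this already forces \<open>P(X \<le> m) \<ge> P(Y \<le> m)\<close> for all \<open>m\<close>.
  Conversely \<open>P(X \<le> 1) = f(1,p) = p / -log(1-p) = 1 / \<Sum>\<^sub>n p\<^sup>n/(n+1)\<close> is strictly decreasing in \<open>p\<close>.
  Since \<open>f(\<cdot>,p)\<close> vanishes at \<open>0\<close> and decreases on the positive integers, the most probable window of
  length \<open>\<epsilon>\<close> is \<open>[1, 1+\<epsilon>]\<close>, so \<open>Q\<^sub>X(\<epsilon>) = P(X \<le> \<lfloor>\<epsilon>\<rfloor> + 1)\<close>; hence both orders reduce to the same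
  comparison of distribution functions.
\<close>

lemma measure_pmf_mono_pmf:
  assumes "\<And>x. x \<in> A \<Longrightarrow> pmf M x \<le> pmf N x"
  shows "measure M A \<le> measure N A"
  using assms by (simp add: measure_pmf_conv_infsetsum infsetsum_mono pmf_abs_summable)

lemma likelihood_ratio_imp_cdf_le:
  fixes X Y :: "nat pmf"
  assumes "\<And>i j. i \<le> m \<Longrightarrow> m < j \<Longrightarrow> pmf Y i * pmf X j \<le> pmf X i * pmf Y j"
  shows "measure Y {..m} \<le> measure X {..m}"
proof -
  have compl: "measure M {m<..} = 1 - measure M {..m}" for M :: "nat pmf"
    using measure_pmf.prob_compl[of "{..m}" M] by (simp add: Compl_eq_Diff_UNIV[symmetric] not_le)
  have "measure Y {..m} * measure X {m<..} = measure (pair_pmf Y X) ({..m} \<times> {m<..})"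
    by (simp add: measure_pmf_prob_product)
  also have "\<dots> \<le> measure (pair_pmf X Y) ({..m} \<times> {m<..})"
    using assms by (intro measure_pmf_mono_pmf) (auto simp: pmf_pair)
  also have "\<dots> = measure X {..m} * measure Y {m<..}"
    by (simp add: measure_pmf_prob_product)
  finally show ?thesis
    by (simp add: compl algebra_simps)
qed

lemma power_div_Suc_sums_ln:
  fixes p :: real
  assumes "0 < p" "p < 1"
  shows "(\<lambda>n. p ^ n / real (Suc n)) sums (- ln (1 - p) / p)"
proof -
  have "(\<lambda>n. - ((- (- p)) ^ n) / real n) sums ln (1 + - p)"
    using assms by (intro ln_series') auto
  then have "(\<lambda>n. p ^ n / real n) sums (- ln (1 - p))"
    using sums_minus by fastforce
  then have "(\<lambda>n. p ^ Suc n / real (Suc n)) sums (- ln (1 - p))"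
    by (subst sums_Suc_iff) simp
  then have "(\<lambda>n. p ^ Suc n / real (Suc n) / p) sums (- ln (1 - p) / p)"
    by (rule sums_divide)
  then show ?thesis
    using assms by simp
qed

lemma logarithmic_pmf_one:
  assumes "0 < p" "p < 1"
  shows "logarithmic_pmf p 1 = 1 / (\<Sum>n. p ^ n / real (Suc n))"
proof -
  have "(\<Sum>n. p ^ n / real (Suc n)) = - ln (1 - p) / p"
    using power_div_Suc_sums_ln[OF assms] by (rule sums_unique[symmetric])
  then show ?thesis
    by (simp add: logarithmic_pmf_def)
qed

lemma suminf_power_div_Suc_strict_mono:
  fixes p q :: real
  assumes "0 < q" "q < p" "p < 1"
  shows "(\<Sum>n. q ^ n / real (Suc n)) < (\<Sum>n. p ^ n / real (Suc n))"
proof -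
  have sums_q: "(\<lambda>n. q ^ n / real (Suc n)) sums (- ln (1 - q) / q)"
    and sums_p: "(\<lambda>n. p ^ n / real (Suc n)) sums (- ln (1 - p) / p)"
    using power_div_Suc_sums_ln assms by simp_all
  have "0 < (\<Sum>n. p ^ n / real (Suc n) - q ^ n / real (Suc n))"
  proof (rule suminf_pos2[where i=1])
    show "summable (\<lambda>n. p ^ n / real (Suc n) - q ^ n / real (Suc n))"
      using sums_p sums_q by (intro summable_diff sums_summable)
    show "0 \<le> p ^ n / real (Suc n) - q ^ n / real (Suc n)" for n
      using assms by (simp add: divide_right_mono power_mono)
  qed (use assms in simp)
  also have "\<dots> = (\<Sum>n. p ^ n / real (Suc n)) - (\<Sum>n. q ^ n / real (Suc n))"
    using sums_summable[OF sums_p] sums_summable[OF sums_q] by (rule suminf_diff[symmetric])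
  finally show ?thesis
    by simp
qed

lemma logarithmic_pmf_one_strict_antimono:
  assumes "0 < q" "q < p" "p < 1"
  shows "logarithmic_pmf p 1 < logarithmic_pmf q 1"
proof -
  have "0 < (\<Sum>n. q ^ n / real (Suc n))"
    using assms sums_summable[OF power_div_Suc_sums_ln[of q]] by (intro suminf_pos) auto
  then have "1 / (\<Sum>n. p ^ n / real (Suc n)) < 1 / (\<Sum>n. q ^ n / real (Suc n))"
    using suminf_power_div_Suc_strict_mono[OF assms] by (intro frac_less2) auto
  then show ?thesis
    using logarithmic_pmf_one[of p] logarithmic_pmf_one[of q] assms by simp
qed

lemma logarithmic_pmf_likelihood_ratio:
  assumes "0 < p" "p \<le> q" "q < 1" "i \<le> j"
  shows "logarithmic_pmf q i * logarithmic_pmf p j \<le> logarithmic_pmf p i * logarithmic_pmf q j"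
proof (cases "i = 0")
  case False
  define c where "c = (-1 / ln (1 - p)) * (-1 / ln (1 - q)) * p ^ i * q ^ i / (real i * real j)"
  obtain d where j: "j = i + d"
    using assms le_Suc_ex by blast
  have "0 \<le> c"
    using assms False by (simp add: c_def ln_less_zero divide_nonneg_neg mult_nonneg_nonpos2 zero_le_mult_iff)
  moreover have "p ^ d \<le> q ^ d"
    using assms by (intro power_mono) auto
  ultimately have "c * p ^ d \<le> c * q ^ d"
    by (rule mult_left_mono[rotated])
  then show ?thesis
    using False assms(4) by (simp add: logarithmic_pmf_def c_def j power_add field_simps)
qed (simp add: logarithmic_pmf_def)

lemma nat_preimage_greaterThan:
  fixes t :: real
  assumes "0 \<le> t"
  shows "real -` {t<..} = - {..nat \<lfloor>t\<rfloor>}"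
proof -
  have "nat \<lfloor>t\<rfloor> < k \<longleftrightarrow> t < real k" for k
    using assms by linarith
  then show ?thesis
    by (auto simp: not_le)
qed

lemma st_le_map_real_iff:
  fixes X Y :: "nat pmf"
  shows "st_le (map_pmf real X) (map_pmf real Y) \<longleftrightarrow> (\<forall>m. measure Y {..m} \<le> measure X {..m})"
proof -
  have tail: "measure (map_pmf real M) {t<..} = 1 - measure M {..nat \<lfloor>t\<rfloor>}"
    if "0 \<le> t" for M :: "nat pmf" and t :: real
    using that measure_pmf.prob_compl[of "{..nat \<lfloor>t\<rfloor>}" M]
    by (simp add: measure_map_pmf nat_preimage_greaterThan Compl_eq_Diff_UNIV)
  have "real -` {t<..} = (UNIV :: nat set)" if "t < 0" for t :: real
    using that by auto
  then have negative: "measure (map_pmf real M) {t<..} = 1" if "t < 0" for M :: "nat pmf" and t :: real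
    using that by (simp add: measure_map_pmf)
  show ?thesis
    unfolding st_le_def
  proof (intro iffI allI)
    fix m :: nat
    assume "\<forall>t. measure (map_pmf real X) {t<..} \<le> measure (map_pmf real Y) {t<..}"
    then have "measure (map_pmf real X) {real m<..} \<le> measure (map_pmf real Y) {real m<..}"
      by blast
    then show "measure Y {..m} \<le> measure X {..m}"
      using tail[of "real m"] by simp
  next
    fix t :: real
    assume "\<forall>m. measure Y {..m} \<le> measure X {..m}"
    then show "measure (map_pmf real X) {t<..} \<le> measure (map_pmf real Y) {t<..}"
      using tail[of t] negative[of t] by (cases "t < 0") auto
  qed
qed

lemma nat_preimage_atLeastAtMost_one:
  fixes \<epsilon> :: real
  assumes "0 \<le> \<epsilon>"
  shows "real -` {1..1 + \<epsilon>} = {1..Suc (nat \<lfloor>\<epsilon>\<rfloor>)}"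
proof -
  have "k \<le> Suc (nat \<lfloor>\<epsilon>\<rfloor>) \<longleftrightarrow> real k \<le> 1 + \<epsilon>" for k
    using assms by linarith
  then show ?thesis
    by auto
qed

lemma nat_preimage_atLeastAtMost_subset:
  fixes x \<epsilon> :: real
  assumes "0 \<le> \<epsilon>"
  shows "real -` {x..x + \<epsilon>} \<subseteq> {nat \<lceil>x\<rceil>..nat \<lceil>x\<rceil> + nat \<lfloor>\<epsilon>\<rfloor>}"
proof
  fix k assume "k \<in> real -` {x..x + \<epsilon>}"
  then have "x \<le> real k" "real k \<le> x + \<epsilon>" by auto
  then have "\<lceil>x\<rceil> \<le> int k" "int k - \<lceil>x\<rceil> \<le> \<lfloor>\<epsilon>\<rfloor>"
    by linarith+
  then show "k \<in> {nat \<lceil>x\<rceil>..nat \<lceil>x\<rceil> + nat \<lfloor>\<epsilon>\<rfloor>}"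
    using assms by (simp add: nat_le_iff)
qed

lemma measure_pmf_atMost_Suc:
  fixes X :: "nat pmf"
  assumes "pmf X 0 = 0"
  shows "measure X {..Suc r} = (\<Sum>i\<le>r. pmf X (Suc i))"
  using assms by (simp add: measure_measure_pmf_finite sum.atMost_Suc_shift del: sum.atMost_Suc)

lemma measure_pmf_atLeastAtMost_le_initial:
  fixes X :: "nat pmf"
  assumes zero: "pmf X 0 = 0"
    and antimono: "\<And>i j. 0 < i \<Longrightarrow> i \<le> j \<Longrightarrow> pmf X j \<le> pmf X i"
  shows "measure X {a..a + r} \<le> measure X {..Suc r}"
proof (cases "a = 0")
  case True
  then show ?thesis
    by (intro measure_pmf.finite_measure_mono) auto
next
  case False
  have "measure X {a..a + r} = (\<Sum>i\<le>r. pmf X (i + a))"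
    using sum.shift_bounds_cl_nat_ivl[of "pmf X" 0 a r]
    by (simp add: measure_measure_pmf_finite atMost_atLeast0 add.commute)
  also have "\<dots> \<le> (\<Sum>i\<le>r. pmf X (Suc i))"
    using False by (intro sum_mono antimono) auto
  also have "\<dots> = measure X {..Suc r}"
    using measure_pmf_atMost_Suc[OF zero] by simp
  finally show ?thesis .
qed

lemma levy_conc_map_real_antimono:
  fixes X :: "nat pmf" and \<epsilon> :: real
  assumes "0 < \<epsilon>" and zero: "pmf X 0 = 0"
    and antimono: "\<And>i j. 0 < i \<Longrightarrow> i \<le> j \<Longrightarrow> pmf X j \<le> pmf X i"
  shows "levy_conc (map_pmf real X) \<epsilon> = measure X {..Suc (nat \<lfloor>\<epsilon>\<rfloor>)}"
  unfolding levy_conc_def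
proof (rule cSup_eq_maximum)
  have "measure X {1..Suc (nat \<lfloor>\<epsilon>\<rfloor>)} = measure X {..Suc (nat \<lfloor>\<epsilon>\<rfloor>)}"
  proof -
    have "{..Suc (nat \<lfloor>\<epsilon>\<rfloor>)} = insert 0 {1..Suc (nat \<lfloor>\<epsilon>\<rfloor>)}"
      by auto
    then show ?thesis
      using zero by (simp add: measure_measure_pmf_finite)
  qed
  then have "measure (map_pmf real X) {1..1 + \<epsilon>} = measure X {..Suc (nat \<lfloor>\<epsilon>\<rfloor>)}"
    using assms by (simp add: measure_map_pmf nat_preimage_atLeastAtMost_one)
  then show "measure X {..Suc (nat \<lfloor>\<epsilon>\<rfloor>)} \<in> range (\<lambda>x. measure (map_pmf real X) {x..x + \<epsilon>})"
    by (rule range_eqI[OF sym])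
next
  fix v assume "v \<in> range (\<lambda>x. measure (map_pmf real X) {x..x + \<epsilon>})"
  then obtain x where "v = measure (map_pmf real X) {x..x + \<epsilon>}"
    by blast
  also have "\<dots> = measure X (real -` {x..x + \<epsilon>})"
    by (rule measure_map_pmf)
  also have "\<dots> \<le> measure X {nat \<lceil>x\<rceil>..nat \<lceil>x\<rceil> + nat \<lfloor>\<epsilon>\<rfloor>}"
    using assms by (intro measure_pmf.finite_measure_mono nat_preimage_atLeastAtMost_subset) auto
  also have "\<dots> \<le> measure X {..Suc (nat \<lfloor>\<epsilon>\<rfloor>)}"
    using zero antimono by (rule measure_pmf_atLeastAtMost_le_initial)
  finally show "v \<le> measure X {..Suc (nat \<lfloor>\<epsilon>\<rfloor>)}" .
qed

lemma logarithmic_pmf_antimono: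
  assumes "0 < p" "p < 1" "0 < i" "i \<le> j"
  shows "logarithmic_pmf p j \<le> logarithmic_pmf p i"
proof -
  have "0 < -1 / ln (1 - p)"
    using assms by (simp add: ln_less_zero)
  moreover have "p ^ j / real j \<le> p ^ i / real i"
    using assms by (intro frac_le power_decreasing) auto
  ultimately have "(-1 / ln (1 - p)) * (p ^ j / real j) \<le> (-1 / ln (1 - p)) * (p ^ i / real i)"
    by (intro mult_left_mono) auto
  then show ?thesis
    using assms unfolding logarithmic_pmf_def by simp
qed

lemma measure_atMost_one_logarithmic:
  assumes "\<And>k. pmf X k = logarithmic_pmf p k"
  shows "measure X {..1} = logarithmic_pmf p 1"
  using assms by (simp add: measure_measure_pmf_finite logarithmic_pmf_def)

lemma levy_conc_logarithmic:
  assumes "0 < p" "p < 1" "\<And>k. pmf X k = logarithmic_pmf p k" "0 < \<epsilon>"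
  shows "levy_conc (map_pmf real X) \<epsilon> = measure X {..Suc (nat \<lfloor>\<epsilon>\<rfloor>)}"
proof (rule levy_conc_map_real_antimono)
  show "pmf X 0 = 0"
    using assms(3) by (simp add: logarithmic_pmf_def)
  show "pmf X j \<le> pmf X i" if "0 < i" "i \<le> j" for i j
    using assms that by (simp add: logarithmic_pmf_antimono)
qed (rule assms(4))

lemma logarithmic_cdf_comparison:
  fixes X Y :: "nat pmf"
  assumes "0 < p" "p < 1" "0 < q" "q < 1"
    and X: "\<And>k. pmf X k = logarithmic_pmf p k"
    and Y: "\<And>k. pmf Y k = logarithmic_pmf q k"
  shows "p \<le> q \<Longrightarrow> measure Y {..m} \<le> measure X {..m}"
    and "measure Y {..1} \<le> measure X {..1} \<Longrightarrow> p \<le> q"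
proof -
  assume "p \<le> q"
  then show "measure Y {..m} \<le> measure X {..m}"
    using assms by (intro likelihood_ratio_imp_cdf_le) (simp add: logarithmic_pmf_likelihood_ratio)
next
  assume "measure Y {..1} \<le> measure X {..1}"
  then have "\<not> logarithmic_pmf p 1 < logarithmic_pmf q 1"
    using measure_atMost_one_logarithmic[OF X] measure_atMost_one_logarithmic[OF Y] by simp
  then show "p \<le> q"
    using assms logarithmic_pmf_one_strict_antimono[of q p] by force
qed

theorem mainTheorem13:
  fixes p q :: real and X Y :: "nat pmf"
  assumes "0 < p" "p < 1" "0 < q" "q < 1"
    and "\<And>k. pmf X k = logarithmic_pmf p k"
    and "\<And>k. pmf Y k = logarithmic_pmf q k"
  shows "(st_le (measure_pmf (map_pmf real X)) (measure_pmf (map_pmf real Y)) \<longleftrightarrow> p \<le> q)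
       \<and> (wd_le (measure_pmf (map_pmf real X)) (measure_pmf (map_pmf real Y)) \<longleftrightarrow> p \<le> q)"
proof -
  note cdf = logarithmic_cdf_comparison[OF assms]
  have levy: "levy_conc (map_pmf real X) \<epsilon> = measure X {..Suc (nat \<lfloor>\<epsilon>\<rfloor>)}"
    "levy_conc (map_pmf real Y) \<epsilon> = measure Y {..Suc (nat \<lfloor>\<epsilon>\<rfloor>)}" if "0 < \<epsilon>" for \<epsilon> :: real
    using assms that by (simp_all add: levy_conc_logarithmic)
  have "st_le (map_pmf real X) (map_pmf real Y) \<longleftrightarrow> p \<le> q"
    unfolding st_le_map_real_iff using cdf by blast
  moreover have "wd_le (map_pmf real X) (map_pmf real Y) \<longleftrightarrow> p \<le> q"
  proof
    assume "wd_le (map_pmf real X) (map_pmf real Y)"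
    then have "levy_conc (map_pmf real Y) (1/2) \<le> levy_conc (map_pmf real X) (1/2)"
      unfolding wd_le_def by simp
    then show "p \<le> q"
      using levy[of "1/2"] cdf(2) by simp
  qed (simp add: wd_le_def levy cdf(1))
  ultimately show ?thesis
    by blast
qed

end
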